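(* Let $(Q,\rightarrow)$ be a finite transition system, $\mathscr{U}$ a preorder on $Q$, $\mathscr{R}\subseteq\mathscr{U}$ a preorder with $\mathscr{R}\circ\rightarrow^{-1}\subseteq\rightarrow^{-1}\circ\mathscr{U}$, $\mathscr{P}\subseteq\mathscr{R}$ an equivalence relation with a representative $E.\mathrm{rep}\in E$ fixed for each block $E$ of $\mathscr{P}$, and $\mathit{NotRel}=\mathscr{U}\setminus\mathscr{R}$. Then: 1. if $E\rightarrow B$ is a $(\mathscr{P},\mathscr{R})$-splitter transition of type 1, then $\mathit{NotRel}(B)\neq\emptyset$; 2. if there is no $(\mathscr{P},\mathscr{R})$-splitter transition of type 1 and $E\rightarrow B$ is a $(\mathscr{P},\mathscr{R})$-splitter transition of type 2, then $\mathit{NotRel}(B)\neq\emptyset$.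
   Context: $\mathscr{R}^{-1}=\{(y,x)\mid(x,y)\in\mathscr{R}\}$, $\mathscr{S}\circ\mathscr{R}=\{(x,y)\mid\exists z.\ x\,\mathscr{R}\,z\wedge z\,\mathscr{S}\,y\}$, $\mathscr{R}(X)=\{q'\mid\exists q\in X.\ q\,\mathscr{R}\,q'\}$, $\rightarrow^{-1}(Y)=\{q\mid\exists y\in Y.\ q\rightarrow y\}$. A preorder is a reflexive transitive relation; its blocks are $[q]_{\mathscr{R}}=\{q'\mid q\,\mathscr{R}\,q'\wedge q'\,\mathscr{R}\,q\}$. For sets, $X\rightarrow Y$ means some $x\in X,y\in Y$ have $x\rightarrow y$; $X\,\mathscr{R}\,Y$ means $(X\times Y)\cap\mathscr{R}\neq\emptyset$. $\mathrm{RelCount}_{(\mathscr{P},\mathscr{R})}(E,B)=|\{E'\text{ block of }\mathscr{P}\mid E.\mathrm{rep}\rightarrow E'\wedge B\,\mathscr{R}\,E'\}|$. A splitter transition of type 1 is a pair ($E$ block of $\mathscr{P}$, $B$ block of $\mathscr{R}$) with $E\rightarrow B$ and $\mathrm{RelCount}_{(\mathscr{P},\mathscr{R})}(E,B)=0$; of type 2, a pair with $E.\mathrm{rep}\rightarrow B$, $\mathrm{RelCount}_{(\mathscr{P},\mathscr{R})}(E,B)=|\{[b]_{\mathscr{P}}\subseteq B\mid E.\mathrm{rep}\rightarrow b\}|$ and $E\not\subseteq\rightarrow^{-1}(B)$. *)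

theory Defs
  imports Main
begin

definition preorder_rel :: "'a set \<Rightarrow> ('a \<times> 'a) set \<Rightarrow> bool" where
  "preorder_rel Q R \<longleftrightarrow> R \<subseteq> Q \<times> Q \<and> (\<forall>q\<in>Q. (q, q) \<in> R) \<and> trans R"

definition rblock :: "('a \<times> 'a) set \<Rightarrow> 'a \<Rightarrow> 'a set" where
  "rblock R q = {q'. (q, q') \<in> R \<and> (q', q) \<in> R}"

definition rblocks :: "'a set \<Rightarrow> ('a \<times> 'a) set \<Rightarrow> 'a set set" where
  "rblocks Q R = {rblock R q | q. q \<in> Q}"

definition set_trans :: "('a \<times> 'a) set \<Rightarrow> 'a set \<Rightarrow> 'a set \<Rightarrow> bool" where
  "set_trans T X Y \<longleftrightarrow> (\<exists>x\<in>X. \<exists>y\<in>Y. (x, y) \<in> T)"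

definition set_rel :: "('a \<times> 'a) set \<Rightarrow> 'a set \<Rightarrow> 'a set \<Rightarrow> bool" where
  "set_rel R X Y \<longleftrightarrow> (X \<times> Y) \<inter> R \<noteq> {}"

definition RelCount ::
  "'a set \<Rightarrow> ('a \<times> 'a) set \<Rightarrow> ('a \<times> 'a) set \<Rightarrow> ('a \<times> 'a) set \<Rightarrow> ('a set \<Rightarrow> 'a)
   \<Rightarrow> 'a set \<Rightarrow> 'a set \<Rightarrow> nat" where
  "RelCount Q T P R rep E B =
     card {E' \<in> Q // P. set_trans T {rep E} E' \<and> set_rel R B E'}"

definition splitter1 ::
  "'a set \<Rightarrow> ('a \<times> 'a) set \<Rightarrow> ('a \<times> 'a) set \<Rightarrow> ('a \<times> 'a) set \<Rightarrow> ('a set \<Rightarrow> 'a)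
   \<Rightarrow> 'a set \<Rightarrow> 'a set \<Rightarrow> bool" where
  "splitter1 Q T P R rep E B \<longleftrightarrow>
     E \<in> Q // P \<and> B \<in> rblocks Q R \<and> set_trans T E B \<and> RelCount Q T P R rep E B = 0"

definition splitter2 ::
  "'a set \<Rightarrow> ('a \<times> 'a) set \<Rightarrow> ('a \<times> 'a) set \<Rightarrow> ('a \<times> 'a) set \<Rightarrow> ('a set \<Rightarrow> 'a)
   \<Rightarrow> 'a set \<Rightarrow> 'a set \<Rightarrow> bool" where
  "splitter2 Q T P R rep E B \<longleftrightarrow>
     E \<in> Q // P \<and> B \<in> rblocks Q R \<and> set_trans T {rep E} B
     \<and> RelCount Q T P R rep E B = card {P `` {b} | b. P `` {b} \<subseteq> B \<and> (rep E, b) \<in> T}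
     \<and> \<not> E \<subseteq> (T\<inverse>) `` B"

end

theory Submission
  imports Defs
begin

text \<open>
  Both parts rest on one simulation step. If \<open>e \<rightarrow> b\<close> with \<open>b \<in> B\<close> and \<open>e \<R> e'\<close>, then the
  hypothesis \<open>\<R> \<circ> \<rightarrow>\<inverse> \<subseteq> \<rightarrow>\<inverse> \<circ> \<U>\<close> yields \<open>w\<close> with \<open>e' \<rightarrow> w\<close> and \<open>b \<U> w\<close>; it remains to
  show \<open>\<not> b \<R> w\<close>. For a splitter of type 1 take \<open>e' = E.rep\<close>: if \<open>b \<R> w\<close>, the block of \<open>w\<close>
  would be counted by \<open>RelCount(E, B)\<close>. For type 2 take \<open>e = E.rep\<close> and \<open>e' \<in> E\<close> without
  successor in \<open>B\<close>, so \<open>w \<notin> B\<close>. The count condition forces every block counted for \<open>B\<close> to lie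
  inside \<open>B\<close>; absence of a type-1 splitter \<open>E \<rightarrow> [w]\<^sub>\<R>\<close> provides a block counted for
  \<open>[w]\<^sub>\<R>\<close>, hence a successor \<open>x\<close> of \<open>E.rep\<close> with \<open>w \<R> x\<close>. If \<open>b \<R> w\<close>, that block is counted
  for \<open>B\<close> too, so \<open>x \<in> B\<close>, and \<open>b \<R> w \<R> x\<close> squeezes \<open>w\<close> into the block \<open>B\<close>.
\<close>

lemma rblock_convex:
  assumes "trans R" "b \<in> rblock R q" "x \<in> rblock R q" "(b, w) \<in> R" "(w, x) \<in> R"
  shows "w \<in> rblock R q"
proof -
  have "(q, b) \<in> R" "(x, q) \<in> R"
    using assms(2,3) unfolding rblock_def by simp_all
  then have "(q, w) \<in> R" "(w, q) \<in> R"
    using assms(4,5) transD[OF assms(1)] by blast+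
  then show ?thesis
    unfolding rblock_def by simp
qed

lemma converse_relcomp_simulation:
  assumes "T\<inverse> O R \<subseteq> U O T\<inverse>" "(z, x) \<in> T" "(z, y) \<in> R"
  obtains w where "(x, w) \<in> U" "(y, w) \<in> T"
  using assms by blast

lemma RelCount_eq_0_iff:
  assumes "finite (Q // P)"
  shows "RelCount Q T P R rep E B = 0 \<longleftrightarrow>
           (\<nexists>E'. E' \<in> Q // P \<and> set_trans T {rep E} E' \<and> set_rel R B E')"
  using assms unfolding RelCount_def by auto

lemma RelCount_nonzero:
  assumes "finite Q" "equiv Q P"
    and "(rep E, w) \<in> T" "w \<in> Q" "b \<in> B" "(b, w) \<in> R"
  shows "RelCount Q T P R rep E B \<noteq> 0"
proof -
  have "finite (Q // P)"
    using assms(1,2) by (simp add: finite_quotient equiv_type)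
  moreover have "w \<in> P `` {w}"
    using assms(2,4) by (rule equiv_class_self)
  ultimately show ?thesis
    using assms(3-6) quotientI[of w Q P]
    unfolding RelCount_eq_0_iff[OF \<open>finite (Q // P)\<close>] set_trans_def set_rel_def by blast
qed

lemma RelCount_eq_card_inner_blocks_imp_subset:
  assumes "finite Q" "equiv Q P" "P \<subseteq> R" "T \<subseteq> Q \<times> Q"
    and count: "RelCount Q T P R rep E B = card {P `` {b} | b. P `` {b} \<subseteq> B \<and> (rep E, b) \<in> T}"
    and E': "E' \<in> Q // P" "set_trans T {rep E} E'" "set_rel R B E'"
  shows "E' \<subseteq> B"
proof -
  define counted where "counted = {E' \<in> Q // P. set_trans T {rep E} E' \<and> set_rel R B E'}"
  define inside where "inside = {P `` {b} | b. P `` {b} \<subseteq> B \<and> (rep E, b) \<in> T}"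
  have "finite counted"
    using assms(1,2) unfolding counted_def by (simp add: finite_quotient equiv_type)
  moreover have "inside \<subseteq> counted"
  proof
    fix X assume "X \<in> inside"
    then obtain b where X: "X = P `` {b}" "X \<subseteq> B" and succ: "(rep E, b) \<in> T"
      unfolding inside_def by auto
    have "b \<in> Q"
      using succ assms(4) by auto
    then have "b \<in> X"
      using X(1) equiv_class_self[OF assms(2)] by simp
    then have "b \<in> B" "(b, b) \<in> R"
      using X assms(3) by auto
    moreover have "X \<in> Q // P"
      using X(1) quotientI[OF \<open>b \<in> Q\<close>] by simp
    ultimately show "X \<in> counted"
      using succ \<open>b \<in> X\<close> unfolding counted_def set_trans_def set_rel_def by blast
  qed
  moreover have "card inside = card counted"
    using count unfolding counted_def inside_def RelCount_def by simp
  ultimately have "inside = counted"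
    by (rule card_subset_eq)
  moreover have "E' \<in> counted"
    using E' unfolding counted_def by simp
  ultimately obtain b where "E' = P `` {b}" "P `` {b} \<subseteq> B"
    unfolding inside_def by blast
  then show ?thesis
    by simp
qed

lemma splitter1_NotRel_nonempty:
  assumes "finite Q" "T \<subseteq> Q \<times> Q" "T\<inverse> O R \<subseteq> U O T\<inverse>" "equiv Q P" "P \<subseteq> R"
    and rep: "rep E \<in> E"
    and split: "splitter1 Q T P R rep E B"
  shows "(U - R) `` B \<noteq> {}"
proof -
  obtain e b where "e \<in> E" "b \<in> B" "(e, b) \<in> T"
    using split unfolding splitter1_def set_trans_def by auto
  moreover have "E \<in> Q // P"
    using split unfolding splitter1_def by simp
  ultimately have "(e, rep E) \<in> R"
    using in_quotient_imp_in_rel[OF assms(4)] rep assms(5) by blast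
  with \<open>(e, b) \<in> T\<close> obtain w where "(b, w) \<in> U" "(rep E, w) \<in> T"
    using converse_relcomp_simulation[OF assms(3)] by blast
  moreover have "w \<in> Q"
    using \<open>(rep E, w) \<in> T\<close> assms(2) by auto
  with \<open>(rep E, w) \<in> T\<close> \<open>b \<in> B\<close> have "(b, w) \<notin> R"
    using RelCount_nonzero[OF assms(1,4)] split unfolding splitter1_def by blast
  ultimately show ?thesis
    using \<open>b \<in> B\<close> by blast
qed

lemma no_splitter1_rep_successor_above:
  assumes "finite Q" "preorder_rel Q R" "equiv Q P" "P \<subseteq> R" "E \<in> Q // P"
    and no_splitter1: "\<not> splitter1 Q T P R rep E (rblock R w)"
    and "e \<in> E" "(e, w) \<in> T" "w \<in> Q"
  obtains E' x where "E' \<in> Q // P" "x \<in> E'" "(rep E, x) \<in> T" "(w, x) \<in> R"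
proof -
  have "trans R"
    using assms(2) unfolding preorder_rel_def by simp
  have finite_blocks: "finite (Q // P)"
    using assms(1,3) by (simp add: finite_quotient equiv_type)
  have "w \<in> rblock R w"
    using \<open>w \<in> Q\<close> assms(2) unfolding rblock_def preorder_rel_def by simp
  then have "set_trans T E (rblock R w)"
    using \<open>e \<in> E\<close> \<open>(e, w) \<in> T\<close> unfolding set_trans_def by blast
  moreover have "rblock R w \<in> rblocks Q R"
    using \<open>w \<in> Q\<close> unfolding rblocks_def by auto
  ultimately have "RelCount Q T P R rep E (rblock R w) \<noteq> 0"
    using no_splitter1 \<open>E \<in> Q // P\<close> unfolding splitter1_def by simp
  then obtain E' where "E' \<in> Q // P" "set_trans T {rep E} E'" "set_rel R (rblock R w) E'"
    using RelCount_eq_0_iff[OF finite_blocks, of T R rep E "rblock R w"] by auto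
  moreover from this obtain x x' w' where
    "x \<in> E'" "(rep E, x) \<in> T" "w' \<in> rblock R w" "x' \<in> E'" "(w', x') \<in> R"
    unfolding set_trans_def set_rel_def by blast
  moreover have "(x', x) \<in> R"
    using in_quotient_imp_in_rel[OF assms(3) \<open>E' \<in> Q // P\<close>] \<open>x \<in> E'\<close> \<open>x' \<in> E'\<close> assms(4) by blast
  moreover have "(w, w') \<in> R"
    using \<open>w' \<in> rblock R w\<close> unfolding rblock_def by simp
  ultimately show ?thesis
    using that \<open>trans R\<close> by (meson transD)
qed

lemma splitter2_NotRel_nonempty:
  assumes "finite Q" "T \<subseteq> Q \<times> Q" "preorder_rel Q R" "T\<inverse> O R \<subseteq> U O T\<inverse>"
    and "equiv Q P" "P \<subseteq> R"
    and rep: "rep E \<in> E"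
    and no_splitter1: "\<And>B'. \<not> splitter1 Q T P R rep E B'"
    and split: "splitter2 Q T P R rep E B"
  shows "(U - R) `` B \<noteq> {}"
proof -
  have "trans R"
    using assms(3) unfolding preorder_rel_def by simp
  from split have E: "E \<in> Q // P" and "B \<in> rblocks Q R"
    and count: "RelCount Q T P R rep E B = card {P `` {b} | b. P `` {b} \<subseteq> B \<and> (rep E, b) \<in> T}"
    unfolding splitter2_def by auto
  then obtain q where B: "B = rblock R q"
    unfolding rblocks_def by auto
  obtain b where "b \<in> B" "(rep E, b) \<in> T"
    using split unfolding splitter2_def set_trans_def by auto
  obtain e where "e \<in> E" and no_succ: "\<forall>y\<in>B. (e, y) \<notin> T"
    using split unfolding splitter2_def by auto
  have "(rep E, e) \<in> R"
    using in_quotient_imp_in_rel[OF assms(5) E] rep \<open>e \<in> E\<close> assms(6) by blast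
  with \<open>(rep E, b) \<in> T\<close> obtain w where "(b, w) \<in> U" "(e, w) \<in> T"
    using converse_relcomp_simulation[OF assms(4)] by blast
  have "(b, w) \<notin> R"
  proof
    assume "(b, w) \<in> R"
    have "w \<in> Q"
      using \<open>(e, w) \<in> T\<close> assms(2) by auto
    then obtain E' x where E': "E' \<in> Q // P" "x \<in> E'" "(rep E, x) \<in> T" "(w, x) \<in> R"
      using no_splitter1_rep_successor_above[OF assms(1,3,5,6) E no_splitter1 \<open>e \<in> E\<close> \<open>(e, w) \<in> T\<close>]
      by blast
    then have "(b, x) \<in> R"
      using \<open>(b, w) \<in> R\<close> \<open>trans R\<close> by (meson transD)
    then have "set_trans T {rep E} E'" "set_rel R B E'"
      using E' \<open>b \<in> B\<close> unfolding set_trans_def set_rel_def by blast+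
    then have "x \<in> B"
      using RelCount_eq_card_inner_blocks_imp_subset[OF assms(1,5,6,2) count E'(1)] E'(2) by blast
    then have "w \<in> B"
      using rblock_convex[OF \<open>trans R\<close>] \<open>b \<in> B\<close> \<open>(b, w) \<in> R\<close> E'(4) B by blast
    then show False
      using no_succ \<open>(e, w) \<in> T\<close> by blast
  qed
  then show ?thesis
    using \<open>(b, w) \<in> U\<close> \<open>b \<in> B\<close> by blast
qed

theorem proposition5:
  fixes Q :: "'a set" and T U R P :: "('a \<times> 'a) set" and rep :: "'a set \<Rightarrow> 'a"
    and E B :: "'a set"
  assumes fin: "finite Q"
    and T_sub: "T \<subseteq> Q \<times> Q"
    and U_pre: "preorder_rel Q U"
    and R_pre: "preorder_rel Q R"
    and RU: "R \<subseteq> U"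
    and sim: "T\<inverse> O R \<subseteq> U O T\<inverse>"
    and P_equiv: "equiv Q P"
    and PR: "P \<subseteq> R"
    and rep: "\<forall>E'\<in>Q // P. rep E' \<in> E'"
  shows "(splitter1 Q T P R rep E B \<longrightarrow> (U - R) `` B \<noteq> {})
       \<and> ((\<nexists>E' B'. splitter1 Q T P R rep E' B') \<and> splitter2 Q T P R rep E B
            \<longrightarrow> (U - R) `` B \<noteq> {})"
proof (intro conjI impI)
  assume split: "splitter1 Q T P R rep E B"
  then have "rep E \<in> E"
    using rep unfolding splitter1_def by simp
  then show "(U - R) `` B \<noteq> {}"
    using splitter1_NotRel_nonempty[OF fin T_sub sim P_equiv PR _ split] by simp
next
  assume "(\<nexists>E' B'. splitter1 Q T P R rep E' B') \<and> splitter2 Q T P R rep E B"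
  then have no_splitter1: "\<And>B'. \<not> splitter1 Q T P R rep E B'"
    and split: "splitter2 Q T P R rep E B" by auto
  then have "rep E \<in> E"
    using rep unfolding splitter2_def by simp
  then show "(U - R) `` B \<noteq> {}"
    using splitter2_NotRel_nonempty[OF fin T_sub R_pre sim P_equiv PR _ no_splitter1 split] by simp
qed

end
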